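(* Let $\kappa\ge0$ satisfy $18^2\alpha_0(\kappa)(2+\alpha_0(\kappa))<1$, and let $e\in E_N^+$ with $\partial\hat\partial\partial\hat\partial e\subseteq E_N$. Then $$\mu_{N,\infty,\kappa}(\{\sigma'\in\Sigma^0_{E_N}:\sigma'_e\ne0\})\le C_I\,\alpha_0(\kappa)^8,\qquad C_I=\frac{18^{13}}{1-18^2\alpha_0(\kappa)}.$$
   Context: $G=\mathbb Z_n$, $\rho$ faithful unitary one-dimensional. On $\mathbb Z^4$: $E_N$ oriented edges with vertices in $B_N=[-N,N]^4\cap\mathbb Z^4$, $E_N^+$ the positively oriented ones ($(x,x+\mathbf e_j)$); $\partial p$ oriented boundary edges of a plaquette; $\hat\partial e=\{p:e\in\partial p\}$; for sets $\partial A=\bigcup_{p\in A}\partial p$, $\hat\partial B=\bigcup_{e\in B}\hat\partial e$. $\Sigma^0_{E_N}$: $\sigma:E_N\to G$ with $\sigma_{-e}=-\sigma_e$ and $\sum_{e\in\partial p}\sigma_e=0$ for all plaquettes $p$ in $B_N$. $\mu_{N,\infty,\kappa}(\sigma)\propto\exp(\kappa\sum_{e\in E_N}\rho(\sigma_e))$ on $\Sigma^0_{E_N}$. $\alpha_0(\kappa)=\sum_{g\ne0}e^{2\kappa(\mathrm{Re}\rho(g)-1)}$. *)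

theory Defs
  imports "HOL-Analysis.Analysis"
begin

type_synonym vertex = "int ^ 4"
type_synonym edge = "vertex \<times> vertex"
type_synonym plaquette = "vertex \<times> 4 \<times> 4"

definition unitv :: "4 \<Rightarrow> vertex" where
  "unitv j = (\<chi> i. if i = j then 1 else 0)"

definition box :: "nat \<Rightarrow> vertex set" where
  "box N = {x. \<forall>i. \<bar>x $ i\<bar> \<le> int N}"

definition edges :: "nat \<Rightarrow> edge set" where
  "edges N = {(x, y). x \<in> box N \<and> y \<in> box N \<and>
                 (\<exists>j. y = x + unitv j \<or> x = y + unitv j)}"

definition pos_edges :: "nat \<Rightarrow> edge set" where
  "pos_edges N = {(x, y). x \<in> box N \<and> y \<in> box N \<and> (\<exists>j. y = x + unitv j)}"

definition rev_edge :: "edge \<Rightarrow> edge" where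
  "rev_edge e = (snd e, fst e)"

text \<open>Oriented plaquettes of Z^4: (x,j,k) with j \<noteq> k is the plaquette with corners
  x, x+e_j, x+e_j+e_k, x+e_k traversed in this order; (x,k,j) is the same plaquette
  with opposite orientation.\<close>
definition plaquettes :: "plaquette set" where
  "plaquettes = {(x, j, k). j \<noteq> k}"

definition bd :: "plaquette \<Rightarrow> edge set" where
  "bd p = (case p of (x, j, k) \<Rightarrow>
     {(x, x + unitv j), (x + unitv j, x + unitv j + unitv k),
      (x + unitv j + unitv k, x + unitv k), (x + unitv k, x)})"

definition cobd :: "edge \<Rightarrow> plaquette set" where
  "cobd e = {p \<in> plaquettes. e \<in> bd p}"

definition bdS :: "plaquette set \<Rightarrow> edge set" where
  "bdS A = (\<Union>p\<in>A. bd p)"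

definition cobdS :: "edge set \<Rightarrow> plaquette set" where
  "cobdS B = (\<Union>e\<in>B. cobd e)"

text \<open>Gauge group Z_n: configurations take values in the representatives {0..<n};
  group operations are taken mod n.  Configurations are extended by 0 outside E_N.\<close>
definition flat_configs :: "nat \<Rightarrow> int \<Rightarrow> (edge \<Rightarrow> int) set" where
  "flat_configs N n = {\<sigma>.
      (\<forall>e. e \<notin> edges N \<longrightarrow> \<sigma> e = 0) \<and>
      (\<forall>e\<in>edges N. 0 \<le> \<sigma> e \<and> \<sigma> e < n) \<and>
      (\<forall>e\<in>edges N. \<sigma> (rev_edge e) = (- \<sigma> e) mod n) \<and>
      (\<forall>p\<in>plaquettes. bd p \<subseteq> edges N \<longrightarrow> (\<Sum>e\<in>bd p. \<sigma> e) mod n = 0)}"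

definition weight :: "nat \<Rightarrow> (int \<Rightarrow> complex) \<Rightarrow> real \<Rightarrow> (edge \<Rightarrow> int) \<Rightarrow> real" where
  "weight N \<rho> \<kappa> \<sigma> = exp (\<kappa> * Re (\<Sum>e\<in>edges N. \<rho> (\<sigma> e)))"

definition mu :: "nat \<Rightarrow> int \<Rightarrow> (int \<Rightarrow> complex) \<Rightarrow> real \<Rightarrow> (edge \<Rightarrow> int) set \<Rightarrow> real" where
  "mu N n \<rho> \<kappa> A =
     (\<Sum>\<sigma>\<in>A \<inter> flat_configs N n. weight N \<rho> \<kappa> \<sigma>) /
     (\<Sum>\<sigma>\<in>flat_configs N n. weight N \<rho> \<kappa> \<sigma>)"

definition alpha0 :: "int \<Rightarrow> (int \<Rightarrow> complex) \<Rightarrow> real \<Rightarrow> real" where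
  "alpha0 n \<rho> \<kappa> = (\<Sum>g\<in>{1..<n}. exp (2 * \<kappa> * (Re (\<rho> g) - 1)))"

text \<open>rho: a faithful unitary one-dimensional representation of Z_n, written as a
  character of Z whose kernel is exactly nZ.\<close>
definition faithful_char :: "int \<Rightarrow> (int \<Rightarrow> complex) \<Rightarrow> bool" where
  "faithful_char n \<rho> \<longleftrightarrow> (\<forall>a b. \<rho> (a + b) = \<rho> a * \<rho> b) \<and>
      (\<forall>a. cmod (\<rho> a) = 1) \<and> (\<forall>a. \<rho> a = 1 \<longleftrightarrow> n dvd a)"

end

(*
  A Peierls argument.  Call two positive edges adjacent when they lie on a common plaquette
  of the box, and for a flat configuration sigma with sigma_e nonzero let K be the connected
  component of e in the support of sigma.  Every plaquette meeting K carries all of its support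
  inside K, so sigma splits into two flat configurations, one supported exactly on K and one
  vanishing on K.  The weight factorises accordingly, and summing over the part supported on K
  costs at most alpha_0(kappa)^|K| relative to the partition function.

  Since e is far enough from the boundary, the plaquette constraints around e force nonzero
  values in eight disjoint regions next to e, so |K| >= 8.  A component of size m is traced by
  a closed walk from e of length 2m - 1 in which each step has at most 18 choices, so there are
  at most 18^(2m-3) of them, and the geometric series over m >= 8 gives the bound.
*)
theory Submission
  imports Defs
begin

section \<open>Edges, flat configurations and the character\<close>

lemma unitv_nth [simp]: "unitv j $ i = (if i = j then 1 else 0)"
  by (simp add: unitv_def)

lemma unitv_eq_iff [simp]: "unitv a = unitv b \<longleftrightarrow> a = b"
  by (auto simp: vec_eq_iff)

lemma unitv_add_unitv_neq_0: "unitv a + unitv b \<noteq> (0::vertex)"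
proof
  assume "unitv a + unitv b = (0::vertex)"
  hence "(unitv a + unitv b) $ a = (0::vertex) $ a" by simp
  thus False by (simp split: if_splits)
qed

lemma unit_step_not_back:
  assumes "y = x + unitv a" "x = y + unitv b"
  shows False
proof -
  have "x = x + (unitv a + unitv b)" using assms by (simp add: algebra_simps)
  thus False using unitv_add_unitv_neq_0 by (metis add_cancel_left_right)
qed

lemma ex_other_direction: "\<exists>k::4. k \<noteq> j"
  by (metis (full_types) zero_neq_one)

lemma finite_box: "finite (box N)"
proof -
  have "box N \<subseteq> (\<lambda>f. \<chi> i. f i) ` (PiE UNIV (\<lambda>_. {-int N..int N}))"
  proof
    fix x assume "x \<in> box N"
    hence "(\<lambda>i. x $ i) \<in> PiE UNIV (\<lambda>_. {-int N..int N})"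
      by (auto simp: box_def abs_le_iff) (metis minus_le_iff)
    thus "x \<in> (\<lambda>f. \<chi> i. f i) ` (PiE UNIV (\<lambda>_. {-int N..int N}))"
      by (metis (no_types, lifting) image_eqI vec_lambda_eta)
  qed
  thus ?thesis by (rule finite_subset) (intro finite_imageI finite_PiE; simp)
qed

lemma finite_edges: "finite (edges N)"
  by (rule finite_subset[of _ "box N \<times> box N"]) (auto simp: edges_def finite_box)

lemma pos_edges_subset_edges: "pos_edges N \<subseteq> edges N"
  by (auto simp: pos_edges_def edges_def)

lemma finite_pos_edges: "finite (pos_edges N)"
  using finite_edges pos_edges_subset_edges finite_subset by blast

lemma rev_edge_rev_edge [simp]: "rev_edge (rev_edge f) = f"
  by (simp add: rev_edge_def)

lemma rev_edge_in_edges: "f \<in> edges N \<Longrightarrow> rev_edge f \<in> edges N"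
  by (auto simp: edges_def rev_edge_def)

lemma rev_edge_not_pos: "f \<in> pos_edges N \<Longrightarrow> rev_edge f \<notin> pos_edges N"
  unfolding pos_edges_def rev_edge_def using unit_step_not_back by fastforce

lemma edges_pos_or_rev: "f \<in> edges N \<Longrightarrow> f \<in> pos_edges N \<or> rev_edge f \<in> pos_edges N"
  by (auto simp: edges_def pos_edges_def rev_edge_def)

lemma edges_eq_pos_Un_rev: "edges N = pos_edges N \<union> rev_edge ` pos_edges N"
proof
  show "edges N \<subseteq> pos_edges N \<union> rev_edge ` pos_edges N"
    using edges_pos_or_rev by (metis UnCI image_eqI rev_edge_rev_edge subsetI)
  show "pos_edges N \<union> rev_edge ` pos_edges N \<subseteq> edges N"
    using pos_edges_subset_edges rev_edge_in_edges by blast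
qed

lemma edge_in_edges: "u \<in> box N \<Longrightarrow> u + unitv d \<in> box N \<Longrightarrow> (u, u + unitv d) \<in> edges N"
  and edge_in_pos_edges: "u \<in> box N \<Longrightarrow> u + unitv d \<in> box N \<Longrightarrow> (u, u + unitv d) \<in> pos_edges N"
  by (auto simp: edges_def pos_edges_def)

lemma flat_configs_outside: "\<sigma> \<in> flat_configs N n \<Longrightarrow> f \<notin> edges N \<Longrightarrow> \<sigma> f = 0"
  and flat_configs_range: "\<sigma> \<in> flat_configs N n \<Longrightarrow> f \<in> edges N \<Longrightarrow> 0 \<le> \<sigma> f \<and> \<sigma> f < n"
  and flat_configs_rev: "\<sigma> \<in> flat_configs N n \<Longrightarrow> f \<in> edges N \<Longrightarrow> \<sigma> (rev_edge f) = (- \<sigma> f) mod n"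
  and flat_configs_plaquette: "\<sigma> \<in> flat_configs N n \<Longrightarrow> p \<in> plaquettes \<Longrightarrow> bd p \<subseteq> edges N
    \<Longrightarrow> (\<Sum>f\<in>bd p. \<sigma> f) mod n = 0"
  unfolding flat_configs_def by blast+

lemma flat_configs_dvd_iff_zero:
  "\<sigma> \<in> flat_configs N n \<Longrightarrow> f \<in> edges N \<Longrightarrow> n dvd \<sigma> f \<longleftrightarrow> \<sigma> f = 0"
  using flat_configs_range[of \<sigma> N n f] by (auto dest: zdvd_imp_le)

lemma finite_flat_configs: "finite (flat_configs N n)"
proof -
  have "inj_on (\<lambda>\<sigma>. restrict \<sigma> (edges N)) (flat_configs N n)"
  proof (rule inj_onI)
    fix s t assume "s \<in> flat_configs N n" "t \<in> flat_configs N n"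
      "restrict s (edges N) = restrict t (edges N)"
    thus "s = t" unfolding flat_configs_def restrict_def by (auto simp: fun_eq_iff) metis
  qed
  moreover have "(\<lambda>\<sigma>. restrict \<sigma> (edges N)) ` flat_configs N n \<subseteq> PiE (edges N) (\<lambda>_. {0..<n})"
    by (auto simp: flat_configs_def)
  moreover have "finite (PiE (edges N) (\<lambda>_. {0..<n}))"
    by (intro finite_PiE finite_edges) auto
  ultimately show ?thesis using finite_imageD finite_subset by metis
qed

lemma zero_in_flat_configs: "n \<ge> 2 \<Longrightarrow> (\<lambda>_. 0) \<in> flat_configs N n"
  by (simp add: flat_configs_def)

lemma faithful_char_0: "faithful_char n \<rho> \<Longrightarrow> \<rho> 0 = 1"
  by (simp add: faithful_char_def)

lemma faithful_char_mod:
  assumes "faithful_char n \<rho>"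
  shows "\<rho> (a mod n) = \<rho> a"
proof -
  have "\<rho> a = \<rho> (a mod n) * \<rho> (n * (a div n))"
    using assms by (metis faithful_char_def mult_div_mod_eq add.commute)
  moreover have "\<rho> (n * (a div n)) = 1" using assms by (simp add: faithful_char_def)
  ultimately show ?thesis by simp
qed

lemma faithful_char_uminus:
  assumes "faithful_char n \<rho>"
  shows "\<rho> (- a) = cnj (\<rho> a)"
proof -
  have "\<rho> (- a) * \<rho> a = 1"
    using assms by (metis faithful_char_def add.left_inverse dvd_0_right)
  moreover have "cnj (\<rho> a) * \<rho> a = 1"
    using assms by (metis faithful_char_def complex_norm_square mult.commute of_real_1 power_one)
  ultimately show ?thesis by (metis mult_cancel_right mult_zero_left zero_neq_one)
qed

lemma Re_faithful_char_uminus_mod: "faithful_char n \<rho> \<Longrightarrow> Re (\<rho> ((- a) mod n)) = Re (\<rho> a)"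
  by (simp add: faithful_char_mod faithful_char_uminus)

section \<open>Eight edges of the support next to e\<close>

lemma flat_plaquette_dvd:
  assumes fl: "\<sigma> \<in> flat_configs N n" and ab: "a \<noteq> b"
    and box: "z \<in> box N" "z + unitv a \<in> box N" "z + unitv b \<in> box N" "z + unitv a + unitv b \<in> box N"
  shows "n dvd (\<sigma> (z, z + unitv a) + \<sigma> (z + unitv a, z + unitv a + unitv b)
           - \<sigma> (z + unitv b, z + unitv b + unitv a) - \<sigma> (z, z + unitv b))"
proof -
  have comm: "z + unitv b + unitv a = z + unitv a + unitv b" by (simp add: algebra_simps)
  have distinct: "z \<noteq> z + unitv a" "z \<noteq> z + unitv b" "z + unitv a \<noteq> z + unitv b"
    "z \<noteq> z + unitv a + unitv b" "z + unitv a \<noteq> z + unitv a + unitv b"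
    "z + unitv b \<noteq> z + unitv a + unitv b"
    using ab by (auto simp: vec_eq_iff)
  have e3: "(z + unitv b, z + unitv a + unitv b) \<in> edges N"
    using box edge_in_edges[of "z + unitv b" N a] by (simp add: comm)
  have e4: "(z, z + unitv b) \<in> edges N" using box by (simp add: edge_in_edges)
  have "(z, a, b) \<in> plaquettes" using ab by (simp add: plaquettes_def)
  moreover have "bd (z, a, b) \<subseteq> edges N"
    using box e3 e4 rev_edge_in_edges[OF e3] rev_edge_in_edges[OF e4]
    by (auto simp: bd_def rev_edge_def edge_in_edges)
  ultimately have "(\<Sum>f\<in>bd (z, a, b). \<sigma> f) mod n = 0" by (rule flat_configs_plaquette[OF fl])
  moreover have "((s::int) + (- c) mod n + (- d) mod n) mod n = (s - c - d) mod n" for s c d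
    by (metis mod_add_right_eq add.assoc diff_conv_add_uminus mod_add_left_eq)
  moreover have "(\<Sum>f\<in>bd (z, a, b). \<sigma> f) = \<sigma> (z, z + unitv a) + \<sigma> (z + unitv a, z + unitv a + unitv b)
      + (- \<sigma> (z + unitv b, z + unitv a + unitv b)) mod n + (- \<sigma> (z, z + unitv b)) mod n"
    using distinct flat_configs_rev[OF fl e3] flat_configs_rev[OF fl e4]
    by (simp add: bd_def rev_edge_def algebra_simps)
  ultimately show ?thesis by (simp add: comm dvd_eq_mod_eq_0)
qed

definition deep_in_box :: "nat \<Rightarrow> vertex \<Rightarrow> 4 \<Rightarrow> bool" where
  "deep_in_box N x j \<longleftrightarrow> - int N \<le> x$j - 1 \<and> x$j + 2 \<le> int N \<and>
     (\<forall>i. i \<noteq> j \<longrightarrow> - int N \<le> x$i - 1 \<and> x$i + 1 \<le> int N)"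

lemma deep_in_box_near:
  assumes "deep_in_box N x j" "(y - x)$j \<in> {-1..2}" "\<forall>i. i \<noteq> j \<longrightarrow> (y - x)$i \<in> {-1..1}"
  shows "y \<in> box N"
  unfolding box_def
proof (intro CollectI allI)
  fix i
  have yi: "y$i = x$i + (y - x)$i" by simp
  show "\<bar>y$i\<bar> \<le> int N"
  proof (cases "i = j")
    case True
    then show ?thesis using assms(1,2) yi unfolding deep_in_box_def
      by (simp del: vector_minus_component add: abs_le_iff)
  next
    case False
    then have "(y - x)$i \<in> {-1..1}" "- int N \<le> x$i - 1" "x$i + 1 \<le> int N"
      using assms(1,3) unfolding deep_in_box_def by blast+
    then show ?thesis using yi by (simp del: vector_minus_component add: abs_le_iff)
  qed
qed

lemma in_bdS_cobdS_bdS_cobd: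
  "p \<in> plaquettes \<Longrightarrow> e \<in> bd p \<Longrightarrow> f \<in> bd p \<Longrightarrow> q \<in> plaquettes \<Longrightarrow> f \<in> bd q
   \<Longrightarrow> g \<in> bd q \<Longrightarrow> g \<in> bdS (cobdS (bdS (cobd e)))"
  unfolding bdS_def cobdS_def cobd_def by blast

lemma deep_in_box_if_neighbourhood_in_edges:
  assumes H: "bdS (cobdS (bdS (cobd (x, x + unitv j)))) \<subseteq> edges N"
  shows "deep_in_box N x j"
proof -
  let ?e = "(x, x + unitv j)"
  have P: "\<And>a b z. a \<noteq> b \<Longrightarrow> (z, a, b) \<in> plaquettes" by (simp add: plaquettes_def)
  have bd: "\<And>z a b. bd (z, a, b) = {(z, z + unitv a), (z + unitv a, z + unitv a + unitv b),
      (z + unitv a + unitv b, z + unitv b), (z + unitv b, z)}" by (simp add: bd_def)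
  have in_box: "u \<in> box N"
    if "(u, v) \<in> bdS (cobdS (bdS (cobd ?e))) \<or> (v, u) \<in> bdS (cobdS (bdS (cobd ?e)))" for u v
    using that H by (auto simp: edges_def)
  have abs_le: "\<And>u i. u \<in> box N \<Longrightarrow> \<bar>u $ i\<bar> \<le> int N" by (simp add: box_def)
  have "- int N \<le> x$j - 1 \<and> x$j + 2 \<le> int N \<and> - int N \<le> x$k - 1 \<and> x$k + 1 \<le> int N"
    if kj: "k \<noteq> j" for k
  proof -
    have "(x - unitv j, x - unitv j + unitv k) \<in> bdS (cobdS (bdS (cobd ?e)))"
      by (rule in_bdS_cobdS_bdS_cobd[of "(x, j, k)" _ "(x + unitv k, x)" "(x - unitv j, k, j)"])
        (use kj in \<open>auto simp: P bd algebra_simps\<close>)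
    moreover have "(x + unitv j + unitv k + unitv j, x + unitv j + unitv j)
        \<in> bdS (cobdS (bdS (cobd ?e)))"
      by (rule in_bdS_cobdS_bdS_cobd[of "(x, j, k)" _ "(x + unitv j, x + unitv j + unitv k)"
            "(x + unitv j, k, j)"])
        (use kj in \<open>auto simp: P bd algebra_simps\<close>)
    moreover have "(x + unitv k, x) \<in> bdS (cobdS (bdS (cobd ?e)))"
      by (rule in_bdS_cobdS_bdS_cobd[of "(x, j, k)" _ ?e "(x, j, k)"])
        (use kj in \<open>auto simp: P bd algebra_simps\<close>)
    moreover have "(x - unitv k, x) \<in> bdS (cobdS (bdS (cobd ?e)))"
      by (rule in_bdS_cobdS_bdS_cobd[of "(x - unitv k, k, j)" _ ?e "(x - unitv k, k, j)"])
        (use kj in \<open>auto simp: P bd algebra_simps\<close>)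
    ultimately have "x - unitv j \<in> box N" "x + unitv j + unitv j \<in> box N"
      "x + unitv k \<in> box N" "x - unitv k \<in> box N"
      by (auto intro: in_box)
    from abs_le[OF this(1), of j] abs_le[OF this(2), of j]
      abs_le[OF this(3), of k] abs_le[OF this(4), of k]
    show ?thesis using kj by auto
  qed
  with ex_other_direction[of j] show ?thesis unfolding deep_in_box_def by blast
qed

definition support :: "nat \<Rightarrow> (edge \<Rightarrow> int) \<Rightarrow> edge set" where
  "support N \<sigma> = {f \<in> pos_edges N. \<sigma> f \<noteq> 0}"

lemma support_subset_pos_edges: "support N \<sigma> \<subseteq> pos_edges N"
  by (simp add: support_def)

lemma finite_support: "finite (support N \<sigma>)"
  using finite_pos_edges finite_subset support_subset_pos_edges by blast

definition mid_offset :: "vertex \<Rightarrow> edge \<Rightarrow> vertex" where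
  "mid_offset x f = fst f + snd f - (x + x)"

text \<open>Eight disjoint regions around the edge from x to x + e_j, read off from the doubled
  midpoint offset m of an edge: None is the line of the edge itself, Some (Some (k, s)) the
  adjacent strip of the (j, k)-plane on the side s e_k, and Some None everything farther away.\<close>
definition offset_class :: "4 \<Rightarrow> (4 \<times> int) option option \<Rightarrow> vertex \<Rightarrow> bool" where
  "offset_class j L m \<longleftrightarrow> (case L of
      None \<Rightarrow> m$j \<in> {0..2} \<and> (\<forall>i. i \<noteq> j \<longrightarrow> m$i = 0)
    | Some (Some (k, s)) \<Rightarrow> m$j \<in> {0..2} \<and> sgn (m$k) = s \<and> (\<forall>i. i \<noteq> j \<and> i \<noteq> k \<longrightarrow> m$i = 0)
    | Some None \<Rightarrow> m$j \<notin> {0..2} \<or> (\<exists>a b. a \<noteq> b \<and> a \<noteq> j \<and> b \<noteq> j \<and> m$a \<noteq> 0 \<and> m$b \<noteq> 0))"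

definition offset_labels :: "4 \<Rightarrow> (4 \<times> int) option option set" where
  "offset_labels j = insert None (insert (Some None) (Some ` Some ` ((UNIV - {j}) \<times> {1, -1})))"

lemma card_offset_labels: "card (offset_labels j) = 8"
proof -
  have "card (Some ` Some ` ((UNIV - {j}) \<times> {1, -1::int})) = 6"
    by (simp add: card_image card_cartesian_product card_Diff_subset)
  thus ?thesis by (auto simp: offset_labels_def card_insert_if)
qed

lemma offset_class_unique:
  assumes "L1 \<in> offset_labels j" "L2 \<in> offset_labels j"
    and "offset_class j L1 m" "offset_class j L2 m"
  shows "L1 = L2"
  using assms unfolding offset_labels_def offset_class_def
  by (auto split: option.splits)

context
  fixes N :: nat and n :: int and \<sigma> :: "edge \<Rightarrow> int" and x :: vertex and j :: 4
  assumes flat: "\<sigma> \<in> flat_configs N n"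
    and deep: "deep_in_box N x j"
    and not_dvd: "\<not> n dvd \<sigma> (x, x + unitv j)"
begin

lemma near_in_box:
  "(y - x)$j \<in> {-1..2} \<Longrightarrow> (\<forall>i. i \<noteq> j \<longrightarrow> (y - x)$i \<in> {-1..1}) \<Longrightarrow> y \<in> box N"
  using deep_in_box_near[OF deep] by blast

lemma support_meets_offset_class_plus:
  assumes kj: "k \<noteq> j"
  shows "\<exists>f\<in>support N \<sigma>. offset_class j (Some (Some (k, 1))) (mid_offset x f)"
proof -
  let ?j = "unitv j" and ?k = "unitv k"
  have q: "n dvd (\<sigma> (x, x + ?j) + \<sigma> (x + ?j, x + ?j + ?k) - \<sigma> (x + ?k, x + ?k + ?j) - \<sigma> (x, x + ?k))"
    by (rule flat_plaquette_dvd[OF flat]) (use kj in \<open>auto intro!: near_in_box\<close>)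
  let ?A = "[(x + ?j, x + ?j + ?k), (x + ?k, x + ?k + ?j), (x, x + ?k)]"
  have "\<exists>f\<in>set ?A. \<sigma> f \<noteq> 0" using q not_dvd by auto
  moreover have "\<forall>f\<in>set ?A. f \<in> pos_edges N"
    using kj by (auto intro!: edge_in_pos_edges near_in_box)
  moreover have "\<forall>f\<in>set ?A. offset_class j (Some (Some (k, 1))) (mid_offset x f)"
    using kj by (auto simp: offset_class_def mid_offset_def)
  ultimately show ?thesis by (auto simp: support_def)
qed

lemma support_meets_offset_class_minus:
  assumes kj: "k \<noteq> j"
  shows "\<exists>f\<in>support N \<sigma>. offset_class j (Some (Some (k, -1))) (mid_offset x f)"
proof -
  let ?j = "unitv j" and ?k = "unitv k"
  define y where "y = x - ?k"
  have box: "y \<in> box N" "y + ?k \<in> box N" "y + ?j \<in> box N" "y + ?j + ?k \<in> box N"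
    using kj unfolding y_def by (auto intro!: near_in_box)
  have "n dvd (\<sigma> (y, y + ?k) + \<sigma> (y + ?k, y + ?k + ?j) - \<sigma> (y + ?j, y + ?j + ?k) - \<sigma> (y, y + ?j))"
    by (rule flat_plaquette_dvd[OF flat]) (use kj box in \<open>auto simp: add_ac\<close>)
  moreover have "y + ?k = x" by (simp add: y_def)
  ultimately have q: "n dvd (\<sigma> (y, y + ?k) + \<sigma> (x, x + ?j) - \<sigma> (y + ?j, y + ?j + ?k) - \<sigma> (y, y + ?j))"
    by simp
  let ?A = "[(y, y + ?k), (y + ?j, y + ?j + ?k), (y, y + ?j)]"
  have "\<exists>f\<in>set ?A. \<sigma> f \<noteq> 0" using q not_dvd by auto
  moreover have "\<forall>f\<in>set ?A. f \<in> pos_edges N"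
    using box by (auto intro!: edge_in_pos_edges)
  moreover have "\<forall>f\<in>set ?A. offset_class j (Some (Some (k, -1))) (mid_offset x f)"
    using kj by (auto simp: offset_class_def mid_offset_def y_def)
  ultimately show ?thesis by (auto simp: support_def)
qed

text \<open>The sum of five plaquette constraints cancels every edge near e and expresses
  the value on e through nine edges of the far region.\<close>
lemma support_meets_offset_class_far:
  assumes kj: "k \<noteq> j" and lj: "l \<noteq> j" and kl: "k \<noteq> l"
  shows "\<exists>f\<in>support N \<sigma>. offset_class j (Some None) (mid_offset x f)"
proof -
  let ?j = "unitv j" and ?k = "unitv k" and ?l = "unitv l"
  have q1: "n dvd (\<sigma> (x - ?j, x - ?j + ?j) + \<sigma> (x - ?j + ?j, x - ?j + ?j + ?k)
      - \<sigma> (x - ?j + ?k, x - ?j + ?k + ?j) - \<sigma> (x - ?j, x - ?j + ?k))"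
    by (rule flat_plaquette_dvd[OF flat]) (use kj kl lj in \<open>auto intro!: near_in_box\<close>)
  have q2: "n dvd (\<sigma> (x + ?k, x + ?k + ?j) + \<sigma> (x + ?k + ?j, x + ?k + ?j + ?l)
      - \<sigma> (x + ?k + ?l, x + ?k + ?l + ?j) - \<sigma> (x + ?k, x + ?k + ?l))"
    by (rule flat_plaquette_dvd[OF flat]) (use kj kl lj in \<open>auto intro!: near_in_box\<close>)
  have q3: "n dvd (\<sigma> (x + ?j + ?k, x + ?j + ?k + ?j) + \<sigma> (x + ?j + ?k + ?j, x + ?j + ?k + ?j + ?l)
      - \<sigma> (x + ?j + ?k + ?l, x + ?j + ?k + ?l + ?j) - \<sigma> (x + ?j + ?k, x + ?j + ?k + ?l))"
    by (rule flat_plaquette_dvd[OF flat]) (use kj kl lj in \<open>auto intro!: near_in_box\<close>)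
  have q4: "n dvd (\<sigma> (x + ?j, x + ?j + ?j) + \<sigma> (x + ?j + ?j, x + ?j + ?j + ?k)
      - \<sigma> (x + ?j + ?k, x + ?j + ?k + ?j) - \<sigma> (x + ?j, x + ?j + ?k))"
    by (rule flat_plaquette_dvd[OF flat]) (use kj kl lj in \<open>auto intro!: near_in_box\<close>)
  have q5: "n dvd (\<sigma> (x, x + ?j) + \<sigma> (x + ?j, x + ?j + ?k) - \<sigma> (x + ?k, x + ?k + ?j) - \<sigma> (x, x + ?k))"
    by (rule flat_plaquette_dvd[OF flat]) (use kj kl lj in \<open>auto intro!: near_in_box\<close>)
  have same: "\<sigma> (x - ?j + ?j, x - ?j + ?j + ?k) = \<sigma> (x, x + ?k)"
    "\<sigma> (x + ?k + ?j, x + ?k + ?j + ?l) = \<sigma> (x + ?j + ?k, x + ?j + ?k + ?l)"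
    by (simp_all add: add_ac)
  let ?A = "[(x - ?j, x - ?j + ?j), (x - ?j, x - ?j + ?k), (x - ?j + ?k, x - ?j + ?k + ?j),
     (x + ?k, x + ?k + ?l), (x + ?k + ?l, x + ?k + ?l + ?j), (x + ?j + ?k + ?l, x + ?j + ?k + ?l + ?j),
     (x + ?j + ?k + ?j, x + ?j + ?k + ?j + ?l), (x + ?j + ?j, x + ?j + ?j + ?k), (x + ?j, x + ?j + ?j)]"
  have "\<exists>f\<in>set ?A. \<sigma> f \<noteq> 0"
  proof (rule ccontr)
    assume "\<not> ?thesis"
    moreover have "n dvd (\<sigma> (x - ?j, x - ?j + ?j) + \<sigma> (x - ?j + ?j, x - ?j + ?j + ?k)
          - \<sigma> (x - ?j + ?k, x - ?j + ?k + ?j) - \<sigma> (x - ?j, x - ?j + ?k)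
       + (\<sigma> (x + ?k, x + ?k + ?j) + \<sigma> (x + ?k + ?j, x + ?k + ?j + ?l)
          - \<sigma> (x + ?k + ?l, x + ?k + ?l + ?j) - \<sigma> (x + ?k, x + ?k + ?l))
       + (\<sigma> (x + ?j + ?k, x + ?j + ?k + ?j) + \<sigma> (x + ?j + ?k + ?j, x + ?j + ?k + ?j + ?l)
          - \<sigma> (x + ?j + ?k + ?l, x + ?j + ?k + ?l + ?j) - \<sigma> (x + ?j + ?k, x + ?j + ?k + ?l))
       + (\<sigma> (x + ?j, x + ?j + ?j) + \<sigma> (x + ?j + ?j, x + ?j + ?j + ?k)
          - \<sigma> (x + ?j + ?k, x + ?j + ?k + ?j) - \<sigma> (x + ?j, x + ?j + ?k))
       + (\<sigma> (x, x + ?j) + \<sigma> (x + ?j, x + ?j + ?k) - \<sigma> (x + ?k, x + ?k + ?j) - \<sigma> (x, x + ?k)))"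
      using q1 q2 q3 q4 q5 by (intro dvd_add)
    ultimately have "n dvd \<sigma> (x, x + ?j)" unfolding same by simp
    thus False using not_dvd by simp
  qed
  moreover have "\<forall>f\<in>set ?A. f \<in> pos_edges N"
    by (simp only: list.set ball_simps)
      (intro conjI TrueI; rule edge_in_pos_edges; rule near_in_box; use kj kl lj in auto)
  moreover have "\<forall>f\<in>set ?A. offset_class j (Some None) (mid_offset x f)"
  proof -
    have two_off: "offset_class j (Some None) m" if "m$k \<noteq> 0" "m$l \<noteq> 0" for m
      using that kj lj kl unfolding offset_class_def by auto
    show ?thesis using kj kl lj by (auto simp: mid_offset_def offset_class_def[of j] intro!: two_off)
  qed
  ultimately show ?thesis by (auto simp: support_def)
qed

end

lemma card_support_ge_8:
  assumes flat: "\<sigma> \<in> flat_configs N n"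
    and e: "(x, x + unitv j) \<in> pos_edges N"
    and H: "bdS (cobdS (bdS (cobd (x, x + unitv j)))) \<subseteq> edges N"
    and nonzero: "\<sigma> (x, x + unitv j) \<noteq> 0"
  shows "8 \<le> card (support N \<sigma>)"
proof -
  note deep = deep_in_box_if_neighbourhood_in_edges[OF H]
  have not_dvd: "\<not> n dvd \<sigma> (x, x + unitv j)"
    using flat_configs_dvd_iff_zero[OF flat] e pos_edges_subset_edges nonzero by blast
  obtain k where kj: "k \<noteq> j" using ex_other_direction by blast
  have "card (UNIV - {j, k} :: 4 set) = 2" using kj by (simp add: card_Diff_subset)
  then obtain l where "l \<in> UNIV - {j, k}" by (metis card.empty ex_in_conv zero_neq_numeral)
  hence lj: "l \<noteq> j" and kl: "k \<noteq> l" by auto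
  have "\<forall>L\<in>offset_labels j. \<exists>f\<in>support N \<sigma>. offset_class j L (mid_offset x f)"
  proof
    fix L assume "L \<in> offset_labels j"
    then consider "L = None" | "L = Some None"
      | k' s where "L = Some (Some (k', s))" "k' \<noteq> j" "s = 1 \<or> s = -1"
      by (auto simp: offset_labels_def)
    thus "\<exists>f\<in>support N \<sigma>. offset_class j L (mid_offset x f)"
    proof cases
      case 1
      thus ?thesis using e nonzero
        by (intro bexI[of _ "(x, x + unitv j)"]) (auto simp: support_def offset_class_def mid_offset_def)
    next
      case 2
      thus ?thesis using support_meets_offset_class_far[OF flat deep not_dvd kj lj kl] by simp
    next
      case 3
      thus ?thesis using support_meets_offset_class_plus[OF flat deep not_dvd]
          support_meets_offset_class_minus[OF flat deep not_dvd] by auto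
    qed
  qed
  then obtain choice where choice: "\<forall>L\<in>offset_labels j. choice L \<in> support N \<sigma> \<and>
      offset_class j L (mid_offset x (choice L))"
    using bchoice[of "offset_labels j" "\<lambda>L f. f \<in> support N \<sigma> \<and> offset_class j L (mid_offset x f)"]
    by blast
  have "inj_on choice (offset_labels j)"
    using choice offset_class_unique by (intro inj_onI) metis
  hence "card (offset_labels j) \<le> card (support N \<sigma>)"
    using choice by (intro card_inj_on_le finite_support) auto
  thus ?thesis by (simp add: card_offset_labels)
qed

section \<open>Adjacency, walks and components\<close>

definition both_orientations :: "edge set \<Rightarrow> edge set" where
  "both_orientations S = {f. f \<in> S \<or> rev_edge f \<in> S}"

definition adjacent :: "nat \<Rightarrow> edge \<Rightarrow> edge \<Rightarrow> bool" where
  "adjacent N f g \<longleftrightarrow> f \<noteq> g \<and> (\<exists>p\<in>plaquettes. bd p \<subseteq> edges N \<and>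
     f \<in> both_orientations (bd p) \<and> g \<in> both_orientations (bd p))"

lemma adjacent_sym: "adjacent N f g \<Longrightarrow> adjacent N g f"
  unfolding adjacent_def by blast

definition edge_dir :: "edge \<Rightarrow> 4" where
  "edge_dir f = (SOME d. snd f = fst f + unitv d)"

lemma edge_dir_eq [simp]: "edge_dir (u, u + unitv d) = d"
  unfolding edge_dir_def by (rule some_equality) auto

lemma edge_dir_eq' [simp]:
  "edge_dir (z + unitv a, z + (unitv a + unitv b)) = b"
  "edge_dir (z + unitv b, z + (unitv a + unitv b)) = a"
  using edge_dir_eq[of "z + unitv a" b] edge_dir_eq[of "z + unitv b" a] by (simp_all add: algebra_simps)

text \<open>A label (c, s, t) names a positive edge adjacent to the positive edge f of direction d:
  s selects the plaquette spanned by d and e_c on the side +e_c (s = 0) or -e_c (s = 1), and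
  t selects one of its three other edges.  Hence every positive edge has at most 18 positive
  neighbours.\<close>
definition nbr_labels :: "edge \<Rightarrow> (4 \<times> nat \<times> nat) set" where
  "nbr_labels f = (UNIV - {edge_dir f}) \<times> {0, 1} \<times> {0, 1, 2}"

definition nbr :: "edge \<Rightarrow> 4 \<times> nat \<times> nat \<Rightarrow> edge" where
  "nbr f l = (case l of (c, s, t) \<Rightarrow>
     (let u = fst f; d = edge_dir f; z = (if s = 0 then u else u - unitv c) in
      if t = 0 then (if s = 0 then (u + unitv c, u + unitv c + unitv d)
                     else (u - unitv c, u - unitv c + unitv d))
      else if t = 1 then (z, z + unitv c) else (z + unitv d, z + unitv d + unitv c)))"

lemma card_nbr_labels: "card (nbr_labels f) = 18"
  by (simp add: nbr_labels_def card_cartesian_product card_Diff_subset)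

lemma finite_nbr_labels: "finite (nbr_labels f)"
  by (simp add: nbr_labels_def)

lemma pos_edge_in_plaquette:
  assumes ab: "a \<noteq> b" and h: "h = (u, u + unitv d)" and m: "h \<in> both_orientations (bd (z, a, b))"
  shows "h = (z, z + unitv a) \<or> h = (z + unitv a, z + unitv a + unitv b)
    \<or> h = (z + unitv b, z + unitv b + unitv a) \<or> h = (z, z + unitv b)"
proof -
  have "z + unitv b + unitv a = z + unitv a + unitv b" by (simp add: algebra_simps)
  thus ?thesis using m h unfolding both_orientations_def bd_def rev_edge_def
    by (auto simp: unitv_add_unitv_neq_0 dest: unit_step_not_back)
qed

lemma nbr_in_plaquette:
  fixes z :: vertex
  assumes ab: "a \<noteq> b"
  defines "e1 \<equiv> (z, z + unitv a)" and "e2 \<equiv> (z + unitv a, z + unitv a + unitv b)"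
    and "e3 \<equiv> (z + unitv b, z + unitv b + unitv a)" and "e4 \<equiv> (z, z + unitv b)"
  shows "\<exists>l\<in>nbr_labels e1. e2 = nbr e1 l" "\<exists>l\<in>nbr_labels e1. e3 = nbr e1 l"
    "\<exists>l\<in>nbr_labels e1. e4 = nbr e1 l" "\<exists>l\<in>nbr_labels e2. e1 = nbr e2 l"
    "\<exists>l\<in>nbr_labels e2. e3 = nbr e2 l" "\<exists>l\<in>nbr_labels e2. e4 = nbr e2 l"
    "\<exists>l\<in>nbr_labels e3. e1 = nbr e3 l" "\<exists>l\<in>nbr_labels e3. e2 = nbr e3 l"
    "\<exists>l\<in>nbr_labels e3. e4 = nbr e3 l" "\<exists>l\<in>nbr_labels e4. e1 = nbr e4 l"
    "\<exists>l\<in>nbr_labels e4. e2 = nbr e4 l" "\<exists>l\<in>nbr_labels e4. e3 = nbr e4 l"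
  unfolding e1_def e2_def e3_def e4_def nbr_labels_def nbr_def
  subgoal by (rule bexI[of _ "(b, 0, 2)"]) (use ab in \<open>auto simp: algebra_simps\<close>)
  subgoal by (rule bexI[of _ "(b, 0, 0)"]) (use ab in \<open>auto simp: algebra_simps\<close>)
  subgoal by (rule bexI[of _ "(b, 0, 1)"]) (use ab in \<open>auto simp: algebra_simps\<close>)
  subgoal by (rule bexI[of _ "(a, 1, 1)"]) (use ab in \<open>auto simp: algebra_simps\<close>)
  subgoal by (rule bexI[of _ "(a, 1, 2)"]) (use ab in \<open>auto simp: algebra_simps\<close>)
  subgoal by (rule bexI[of _ "(a, 1, 0)"]) (use ab in \<open>auto simp: algebra_simps\<close>)
  subgoal by (rule bexI[of _ "(b, 1, 0)"]) (use ab in \<open>auto simp: algebra_simps\<close>)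
  subgoal by (rule bexI[of _ "(b, 1, 2)"]) (use ab in \<open>auto simp: algebra_simps\<close>)
  subgoal by (rule bexI[of _ "(b, 1, 1)"]) (use ab in \<open>auto simp: algebra_simps\<close>)
  subgoal by (rule bexI[of _ "(a, 0, 1)"]) (use ab in \<open>auto simp: algebra_simps\<close>)
  subgoal by (rule bexI[of _ "(a, 0, 0)"]) (use ab in \<open>auto simp: algebra_simps\<close>)
  subgoal by (rule bexI[of _ "(a, 0, 2)"]) (use ab in \<open>auto simp: algebra_simps\<close>)
  done

lemma adjacent_pos_edge_is_nbr:
  assumes f: "f \<in> pos_edges N" and g: "g \<in> pos_edges N" and adj: "adjacent N f g"
  shows "\<exists>l\<in>nbr_labels f. g = nbr f l"
proof -
  obtain z a b where ab: "a \<noteq> b" and fg: "f \<noteq> g"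
    and on: "f \<in> both_orientations (bd (z, a, b))" "g \<in> both_orientations (bd (z, a, b))"
    using adj unfolding adjacent_def plaquettes_def by auto
  obtain u d where "f = (u, u + unitv d)" using f by (auto simp: pos_edges_def)
  note F = pos_edge_in_plaquette[OF ab this on(1)]
  obtain v d' where "g = (v, v + unitv d')" using g by (auto simp: pos_edges_def)
  note G = pos_edge_in_plaquette[OF ab this on(2)]
  from F G fg nbr_in_plaquette[OF ab, of z] show ?thesis by (elim disjE) simp_all
qed

definition walks :: "nat \<Rightarrow> edge \<Rightarrow> nat \<Rightarrow> edge list set" where
  "walks N e L = {w. length w = L \<and> hd w = e \<and> set w \<subseteq> pos_edges N \<and> successively (adjacent N) w}"

lemma walks_Suc_subset:
  "walks N e (Suc (Suc m)) \<subseteq>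
     (\<lambda>(w, l). w @ [nbr (last w) l]) ` Sigma (walks N e (Suc m)) (\<lambda>w. nbr_labels (last w))"
proof
  fix v assume v: "v \<in> walks N e (Suc (Suc m))"
  define w where "w = butlast v"
  define g where "g = last v"
  have "v \<noteq> []" using v by (auto simp: walks_def)
  hence vw: "v = w @ [g]" by (simp add: w_def g_def)
  have "length w = Suc m" using v by (simp add: walks_def w_def)
  hence wne: "w \<noteq> []" by auto
  have "successively (adjacent N) (w @ [g])" using v vw by (simp add: walks_def)
  hence adj: "successively (adjacent N) w" "adjacent N (last w) g"
    using wne by (auto simp: successively_append_iff)
  have w: "w \<in> walks N e (Suc m)"
    using v vw wne adj(1) \<open>length w = Suc m\<close> by (auto simp: walks_def)
  have "last w \<in> pos_edges N" "g \<in> pos_edges N"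
    using v vw wne by (auto simp: walks_def)
  then obtain l where "l \<in> nbr_labels (last w)" "g = nbr (last w) l"
    using adjacent_pos_edge_is_nbr adj(2) by blast
  with w show "v \<in> (\<lambda>(w, l). w @ [nbr (last w) l]) ` Sigma (walks N e (Suc m)) (\<lambda>w. nbr_labels (last w))"
    using vw by force
qed

lemma card_walks_le: "finite (walks N e (Suc m)) \<and> card (walks N e (Suc m)) \<le> 18 ^ m"
proof (induction m)
  case 0
  have "walks N e (Suc 0) \<subseteq> {[e]}"
    by (auto simp: walks_def length_Suc_conv)
  thus ?case using card_mono[of "{[e]}"] finite_subset by fastforce
next
  case (Suc m)
  let ?S = "Sigma (walks N e (Suc m)) (\<lambda>w. nbr_labels (last w))"
  have fin: "finite ?S" using Suc.IH finite_nbr_labels by auto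
  have "card ?S = 18 * card (walks N e (Suc m))"
    using Suc.IH finite_nbr_labels by (simp add: card_nbr_labels)
  moreover have "card (walks N e (Suc (Suc m))) \<le> card ?S"
    using card_mono[OF finite_imageI[OF fin] walks_Suc_subset] card_image_le[OF fin] by (rule order_trans)
  ultimately show ?case
    using Suc.IH finite_subset[OF walks_Suc_subset finite_imageI[OF fin]] by simp
qed

definition adj_rel :: "nat \<Rightarrow> edge set \<Rightarrow> (edge \<times> edge) set" where
  "adj_rel N S = {(a, b). a \<in> S \<and> b \<in> S \<and> adjacent N a b}"

definition component :: "nat \<Rightarrow> edge set \<Rightarrow> edge \<Rightarrow> edge set" where
  "component N S e = {g \<in> S. (e, g) \<in> (adj_rel N S)\<^sup>*}"

lemma component_subset: "component N S e \<subseteq> S"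
  by (auto simp: component_def)

lemma self_in_component: "e \<in> S \<Longrightarrow> e \<in> component N S e"
  by (simp add: component_def)

lemma component_exit:
  assumes "S' \<subseteq> component N S e" "e \<in> S'" "g \<in> component N S e" "g \<notin> S'"
  shows "\<exists>a\<in>S'. \<exists>b\<in>component N S e - S'. adjacent N a b"
proof -
  have "(e, g) \<in> (adj_rel N S)\<^sup>*" using assms(3) by (simp add: component_def)
  thus ?thesis using assms(4)
  proof (induction rule: rtrancl_induct)
    case base thus ?case using assms(2) by blast
  next
    case (step c d)
    show ?case
    proof (cases "c \<in> S'")
      case True
      have "(e, d) \<in> (adj_rel N S)\<^sup>*" using step(1,2) by (rule rtrancl_into_rtrancl)
      hence "d \<in> component N S e" using step(2) by (auto simp: component_def adj_rel_def)
      thus ?thesis using True step(2,4) by (auto simp: adj_rel_def)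
    next
      case False thus ?thesis using step.IH by blast
    qed
  qed
qed

lemma successively_insert_back_and_forth:
  assumes "successively P (xs @ ys)" "xs \<noteq> []" "last xs = a" "P a b" "P b a"
  shows "successively P (xs @ b # a # ys)"
proof -
  have "successively P xs" "successively P (a # ys)"
    using assms(1-3) by (auto simp: successively_append_iff successively_Cons split: list.splits)
  thus ?thesis using assms(2-5) by (auto simp: successively_append_iff)
qed

definition closed_walk_through :: "nat \<Rightarrow> edge \<Rightarrow> edge set \<Rightarrow> edge list \<Rightarrow> bool" where
  "closed_walk_through N e K w \<longleftrightarrow> length w = 2 * card K - 1 \<and> hd w = e \<and> last w = e
     \<and> set w = K \<and> successively (adjacent N) w"

text \<open>Grow the walk one new edge at a time: go out along an edge leaving the visited set
  and come straight back, which costs two steps per edge.\<close>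
lemma closed_walk_through_subset:
  assumes fin: "finite (component N S e)" and eS: "e \<in> S"
  shows "Suc i \<le> card (component N S e) \<Longrightarrow>
    \<exists>S'\<subseteq>component N S e. card S' = Suc i \<and> (\<exists>w. closed_walk_through N e S' w)"
proof (induction i)
  case 0
  show ?case
    using self_in_component[OF eS]
    by (intro exI[of _ "{e}"] conjI) (auto simp: closed_walk_through_def intro!: exI[of _ "[e]"])
next
  case (Suc i)
  then obtain S' w where S': "S' \<subseteq> component N S e" "card S' = Suc i"
    and w: "closed_walk_through N e S' w" by auto
  have wne: "w \<noteq> []" using w S' by (auto simp: closed_walk_through_def)
  hence eS': "e \<in> S'" using w by (metis closed_walk_through_def hd_in_set)
  have "S' \<noteq> component N S e" using S' Suc.prems by auto
  then obtain g where "g \<in> component N S e" "g \<notin> S'" using S' by blast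
  then obtain a b where ab: "a \<in> S'" "b \<in> component N S e - S'" "adjacent N a b"
    using component_exit[OF S'(1) eS'] by blast
  obtain idx where idx: "idx < length w" "w ! idx = a"
    using ab(1) w by (metis closed_walk_through_def in_set_conv_nth)
  define xs where "xs = take (Suc idx) w"
  define ys where "ys = drop (Suc idx) w"
  have wxy: "w = xs @ ys" by (simp add: xs_def ys_def)
  have xne: "xs \<noteq> []" and lx: "last xs = a"
    using idx wne by (simp_all add: xs_def take_Suc_conv_app_nth)
  have card_b: "card (insert b S') = Suc (card S')"
    using S' ab fin finite_subset by (metis DiffD2 card_insert_disjoint)
  have "closed_walk_through N e (insert b S') (xs @ b # a # ys)"
  proof -
    have "last (xs @ b # a # ys) = e"
      using lx w wxy by (cases "ys = []") (auto simp: closed_walk_through_def)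
    moreover have "successively (adjacent N) (xs @ b # a # ys)"
      using successively_insert_back_and_forth[of "adjacent N" xs ys a b] w wxy xne lx ab(3) adjacent_sym
      by (auto simp: closed_walk_through_def)
    ultimately show ?thesis
      using w wxy xne ab(1) card_b S'(2) by (auto simp: closed_walk_through_def)
  qed
  moreover have "insert b S' \<subseteq> component N S e" "card (insert b S') = Suc (Suc i)"
    using S' ab card_b by auto
  ultimately show ?case by blast
qed

lemma closed_walk_through_component:
  assumes "finite (component N S e)" "e \<in> S"
  shows "\<exists>w. closed_walk_through N e (component N S e) w"
proof -
  have "0 < card (component N S e)"
    using assms self_in_component[OF assms(2)] card_gt_0_iff by blast
  then obtain S' where "S' \<subseteq> component N S e" "card S' = card (component N S e)"
    "\<exists>w. closed_walk_through N e S' w"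
    using closed_walk_through_subset[OF assms, of "card (component N S e) - 1"] by auto
  thus ?thesis using assms(1) by (metis card_subset_eq)
qed

lemma closed_walk_through_butlast:
  assumes g: "closed_walk_through N e K w" and pos: "set w \<subseteq> pos_edges N" and m: "card K \<ge> 2"
  shows "butlast w @ [e] = w" "butlast w \<in> walks N e (Suc (2 * card K - 3))"
proof -
  have l: "length w = 2 * card K - 1" using g by (simp add: closed_walk_through_def)
  hence wne: "w \<noteq> []" using m by auto
  have ap: "butlast w @ [last w] = w" by (rule append_butlast_last_id[OF wne])
  thus "butlast w @ [e] = w" using g by (simp add: closed_walk_through_def)
  have bl: "length (butlast w) = Suc (2 * card K - 3)" using l m by simp
  hence bne: "butlast w \<noteq> []" by (metis list.size(3) nat.simps(3))
  have "hd (butlast w) = hd w" using hd_append2[OF bne, of "[last w]"] unfolding ap by simp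
  hence "hd (butlast w) = e" using g by (simp add: closed_walk_through_def)
  moreover have "set (butlast w) \<subseteq> pos_edges N" using pos in_set_butlastD by fast
  moreover have "successively (adjacent N) (butlast w)"
  proof -
    have "successively (adjacent N) (butlast w @ [last w])"
      unfolding ap using g by (simp add: closed_walk_through_def)
    thus ?thesis by (simp add: successively_append_iff)
  qed
  ultimately show "butlast w \<in> walks N e (Suc (2 * card K - 3))" using bl by (simp add: walks_def)
qed

text \<open>A closed walk determines the set it covers, and dropping its last step (which is
  always back to e) leaves a walk of length 2m - 2 from e.\<close>
lemma card_closed_walk_sets_le:
  assumes walk: "\<forall>K\<in>\<K>. \<exists>w. set w \<subseteq> pos_edges N \<and> closed_walk_through N e K w" and m: "m \<ge> 2"
  shows "card {K\<in>\<K>. card K = m} \<le> 18 ^ (2 * m - 3)"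
proof -
  obtain W where W: "\<And>K. K \<in> \<K> \<Longrightarrow> set (W K) \<subseteq> pos_edges N \<and> closed_walk_through N e K (W K)"
    using bchoice[OF walk] by blast
  let ?\<K>m = "{K\<in>\<K>. card K = m}"
  have walk_W: "butlast (W K) \<in> walks N e (Suc (2 * m - 3))"
    and last_W: "butlast (W K) @ [e] = W K" and set_W: "set (W K) = K"
    if K: "K \<in> ?\<K>m" for K
  proof -
    have g: "closed_walk_through N e K (W K)" and pos: "set (W K) \<subseteq> pos_edges N"
      and card: "card K = m" using W K by auto
    show "set (W K) = K" using g by (simp add: closed_walk_through_def)
    show "butlast (W K) \<in> walks N e (Suc (2 * m - 3))" "butlast (W K) @ [e] = W K"
      using closed_walk_through_butlast[OF g pos] card m by simp_all
  qed
  have "inj_on (\<lambda>K. butlast (W K)) ?\<K>m"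
  proof (rule inj_onI)
    fix K1 K2 assume K: "K1 \<in> ?\<K>m" "K2 \<in> ?\<K>m" "butlast (W K1) = butlast (W K2)"
    have "K1 = set (butlast (W K1) @ [e])" using set_W[OF K(1)] last_W[OF K(1)] by simp
    also have "\<dots> = set (butlast (W K2) @ [e])" using K(3) by simp
    also have "\<dots> = K2" using set_W[OF K(2)] last_W[OF K(2)] by simp
    finally show "K1 = K2" .
  qed
  moreover have "(\<lambda>K. butlast (W K)) ` ?\<K>m \<subseteq> walks N e (Suc (2 * m - 3))"
    using walk_W by blast
  ultimately have "card ?\<K>m \<le> card (walks N e (Suc (2 * m - 3)))"
    using card_walks_le by (blast intro: card_inj_on_le)
  also have "\<dots> \<le> 18 ^ (2 * m - 3)" using card_walks_le by blast
  finally show ?thesis .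
qed

section \<open>Splitting off a component\<close>

definition config_on :: "edge set \<Rightarrow> (edge \<Rightarrow> int) \<Rightarrow> edge \<Rightarrow> int" where
  "config_on K \<sigma> f = (if f \<in> both_orientations K then \<sigma> f else 0)"

definition config_off :: "edge set \<Rightarrow> (edge \<Rightarrow> int) \<Rightarrow> edge \<Rightarrow> int" where
  "config_off K \<sigma> f = (if f \<in> both_orientations K then 0 else \<sigma> f)"

lemma config_on_add_config_off: "config_on K \<sigma> f + config_off K \<sigma> f = \<sigma> f"
  by (simp add: config_on_def config_off_def)

definition pos_rep :: "nat \<Rightarrow> edge \<Rightarrow> edge" where
  "pos_rep N f = (if f \<in> pos_edges N then f else rev_edge f)"

lemma pos_rep_in_pos_edges: "f \<in> edges N \<Longrightarrow> pos_rep N f \<in> pos_edges N"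
  using edges_pos_or_rev[of f N] by (auto simp: pos_rep_def)

lemma both_orientations_iff_pos_rep:
  "K \<subseteq> pos_edges N \<Longrightarrow> f \<in> edges N \<Longrightarrow> f \<in> both_orientations K \<longleftrightarrow> pos_rep N f \<in> K"
  using edges_pos_or_rev[of f N] rev_edge_not_pos[of f N] rev_edge_not_pos[of "rev_edge f" N]
  by (auto simp: pos_rep_def both_orientations_def)

lemma rev_edge_in_both_orientations [simp]:
  "rev_edge f \<in> both_orientations K \<longleftrightarrow> f \<in> both_orientations K"
  by (auto simp: both_orientations_def)

lemma pos_rep_in_both_orientations: "f \<in> S \<Longrightarrow> pos_rep N f \<in> both_orientations S"
  by (auto simp: pos_rep_def both_orientations_def)

lemma flat_configs_pos_rep_eq_0_iff:
  assumes flat: "\<sigma> \<in> flat_configs N n" and f: "f \<in> edges N"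
  shows "\<sigma> (pos_rep N f) = 0 \<longleftrightarrow> \<sigma> f = 0"
proof (cases "f \<in> pos_edges N")
  case False
  have "(- \<sigma> f) mod n = 0 \<longleftrightarrow> n dvd \<sigma> f" by (simp add: dvd_eq_mod_eq_0[symmetric])
  thus ?thesis using False flat_configs_rev[OF flat f] flat_configs_dvd_iff_zero[OF flat f]
    by (simp add: pos_rep_def)
qed (simp add: pos_rep_def)

definition plaquette_closed :: "nat \<Rightarrow> (edge \<Rightarrow> int) \<Rightarrow> edge set \<Rightarrow> bool" where
  "plaquette_closed N \<sigma> K \<longleftrightarrow> (\<forall>p\<in>plaquettes. bd p \<subseteq> edges N \<longrightarrow> (\<exists>f\<in>K. f \<in> both_orientations (bd p)) \<longrightarrow>
       (\<forall>g\<in>support N \<sigma>. g \<in> both_orientations (bd p) \<longrightarrow> g \<in> K))"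

lemma component_plaquette_closed: "plaquette_closed N \<sigma> (component N (support N \<sigma>) e)"
  unfolding plaquette_closed_def
proof (intro ballI impI)
  fix p g
  assume p: "p \<in> plaquettes" "bd p \<subseteq> edges N"
    and "\<exists>f\<in>component N (support N \<sigma>) e. f \<in> both_orientations (bd p)"
    and g: "g \<in> support N \<sigma>" "g \<in> both_orientations (bd p)"
  then obtain f where f: "f \<in> component N (support N \<sigma>) e" "f \<in> both_orientations (bd p)" by blast
  show "g \<in> component N (support N \<sigma>) e"
  proof (cases "f = g")
    case False
    hence "(f, g) \<in> adj_rel N (support N \<sigma>)"
      using p f g by (auto simp: adj_rel_def component_def adjacent_def)
    moreover have "(e, f) \<in> (adj_rel N (support N \<sigma>))\<^sup>*" using f by (simp add: component_def)
    ultimately show ?thesis using g by (auto simp: component_def intro: rtrancl_into_rtrancl)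
  qed (use f in simp)
qed

text \<open>A plaquette touching K carries all of its support inside K, so its constraint holds
  for the part of the configuration on K and, trivially, for the part off K.\<close>
lemma flat_configs_config_on_off:
  assumes n2: "n \<ge> 2" and flat: "\<sigma> \<in> flat_configs N n" and KP: "K \<subseteq> pos_edges N"
    and closed: "plaquette_closed N \<sigma> K"
  shows "config_on K \<sigma> \<in> flat_configs N n" "config_off K \<sigma> \<in> flat_configs N n"
proof -
  have plaquette: "(\<Sum>f\<in>bd p. config_on K \<sigma> f) mod n = 0 \<and> (\<Sum>f\<in>bd p. config_off K \<sigma> f) mod n = 0"
    if p: "p \<in> plaquettes" "bd p \<subseteq> edges N" for p
  proof (cases "\<exists>f\<in>K. f \<in> both_orientations (bd p)")
    case True
    have zero: "\<sigma> h = 0" if h: "h \<in> bd p" "h \<notin> both_orientations K" for h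
    proof (rule ccontr)
      assume "\<sigma> h \<noteq> 0"
      have hE: "h \<in> edges N" using h p by blast
      hence "pos_rep N h \<in> support N \<sigma>"
        using \<open>\<sigma> h \<noteq> 0\<close> flat_configs_pos_rep_eq_0_iff[OF flat hE] pos_rep_in_pos_edges
        by (simp add: support_def)
      hence "pos_rep N h \<in> K"
        using closed True p h pos_rep_in_both_orientations unfolding plaquette_closed_def by blast
      thus False using h both_orientations_iff_pos_rep[OF KP hE] by blast
    qed
    have "(\<Sum>f\<in>bd p. config_on K \<sigma> f) = (\<Sum>f\<in>bd p. \<sigma> f)"
      by (rule sum.cong) (auto simp: config_on_def zero)
    moreover have "(\<Sum>f\<in>bd p. config_off K \<sigma> f) = 0"
      by (rule sum.neutral) (auto simp: config_off_def zero)
    ultimately show ?thesis using flat_configs_plaquette[OF flat p] by simp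
  next
    case False
    have off: "h \<notin> both_orientations K" if h: "h \<in> bd p" for h
      using False h p both_orientations_iff_pos_rep[OF KP] pos_rep_in_both_orientations by blast
    have "(\<Sum>f\<in>bd p. config_on K \<sigma> f) = 0"
      by (rule sum.neutral) (auto simp: config_on_def off)
    moreover have "(\<Sum>f\<in>bd p. config_off K \<sigma> f) = (\<Sum>f\<in>bd p. \<sigma> f)"
      by (rule sum.cong) (auto simp: config_off_def off)
    ultimately show ?thesis using flat_configs_plaquette[OF flat p] by simp
  qed
  show "config_on K \<sigma> \<in> flat_configs N n" "config_off K \<sigma> \<in> flat_configs N n"
    using flat_configs_outside[OF flat] flat_configs_range[OF flat] flat_configs_rev[OF flat]
      plaquette n2 unfolding flat_configs_def by (auto simp: config_on_def config_off_def)
qed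

lemma support_config_on:
  assumes "K \<subseteq> support N \<sigma>"
  shows "support N (config_on K \<sigma>) = K"
proof -
  have KP: "K \<subseteq> pos_edges N" using assms by (auto simp: support_def)
  have "f \<in> both_orientations K \<longleftrightarrow> f \<in> K" if f: "f \<in> pos_edges N" for f
  proof -
    have "f \<in> edges N" using f pos_edges_subset_edges by blast
    thus ?thesis using both_orientations_iff_pos_rep[OF KP] f by (simp add: pos_rep_def)
  qed
  thus ?thesis using assms KP by (auto simp: support_def config_on_def)
qed

section \<open>The Peierls estimate\<close>

definition defect :: "(int \<Rightarrow> complex) \<Rightarrow> int \<Rightarrow> real" where
  "defect \<rho> g = Re (\<rho> g) - 1"

text \<open>The Gibbs weight without the constant factor exp (\<kappa> |E_N|), which cancels in mu.\<close>
definition rel_weight :: "nat \<Rightarrow> (int \<Rightarrow> complex) \<Rightarrow> real \<Rightarrow> (edge \<Rightarrow> int) \<Rightarrow> real" where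
  "rel_weight N \<rho> \<kappa> \<sigma> = exp (\<kappa> * (\<Sum>f\<in>edges N. defect \<rho> (\<sigma> f)))"

lemma rel_weight_pos: "rel_weight N \<rho> \<kappa> \<sigma> > 0"
  and rel_weight_nonneg: "rel_weight N \<rho> \<kappa> \<sigma> \<ge> 0"
  by (simp_all add: rel_weight_def)

lemma weight_eq_rel_weight: "weight N \<rho> \<kappa> \<sigma> = exp (\<kappa> * real (card (edges N))) * rel_weight N \<rho> \<kappa> \<sigma>"
proof -
  have "Re (\<Sum>f\<in>edges N. \<rho> (\<sigma> f)) = (\<Sum>f\<in>edges N. defect \<rho> (\<sigma> f)) + real (card (edges N))"
    by (simp add: defect_def sum_subtractf)
  thus ?thesis unfolding weight_def rel_weight_def by (simp add: distrib_left exp_add)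
qed

lemma defect_0: "faithful_char n \<rho> \<Longrightarrow> defect \<rho> 0 = 0"
  by (simp add: defect_def faithful_char_0)

lemma rel_weight_config_on_off:
  assumes "faithful_char n \<rho>"
  shows "rel_weight N \<rho> \<kappa> \<sigma> = rel_weight N \<rho> \<kappa> (config_on K \<sigma>) * rel_weight N \<rho> \<kappa> (config_off K \<sigma>)"
proof -
  have "(\<Sum>f\<in>edges N. defect \<rho> (\<sigma> f))
      = (\<Sum>f\<in>edges N. defect \<rho> (config_on K \<sigma> f)) + (\<Sum>f\<in>edges N. defect \<rho> (config_off K \<sigma> f))"
    unfolding sum.distrib[symmetric]
    by (rule sum.cong) (auto simp: config_on_def config_off_def defect_0[OF assms])
  thus ?thesis unfolding rel_weight_def by (simp add: distrib_left exp_add)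
qed

text \<open>Each positive edge of the support is counted twice, once in each orientation.\<close>
lemma rel_weight_eq_prod_support:
  assumes fc: "faithful_char n \<rho>" and flat: "\<tau> \<in> flat_configs N n"
  shows "rel_weight N \<rho> \<kappa> \<tau> = (\<Prod>f\<in>support N \<tau>. exp (2 * \<kappa> * defect \<rho> (\<tau> f)))"
proof -
  let ?P = "pos_edges N"
  have inj: "inj_on rev_edge ?P" by (metis inj_onI rev_edge_rev_edge)
  have "(\<Sum>f\<in>edges N. defect \<rho> (\<tau> f))
      = (\<Sum>f\<in>?P. defect \<rho> (\<tau> f)) + (\<Sum>f\<in>rev_edge ` ?P. defect \<rho> (\<tau> f))"
    unfolding edges_eq_pos_Un_rev
    by (rule sum.union_disjoint) (use finite_pos_edges rev_edge_not_pos in auto)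
  also have "(\<Sum>f\<in>rev_edge ` ?P. defect \<rho> (\<tau> f)) = (\<Sum>f\<in>?P. defect \<rho> (\<tau> (rev_edge f)))"
    by (simp add: sum.reindex[OF inj])
  also have "\<dots> = (\<Sum>f\<in>?P. defect \<rho> (\<tau> f))"
  proof (rule sum.cong[OF refl])
    fix f assume "f \<in> ?P"
    hence "\<tau> (rev_edge f) = (- \<tau> f) mod n" using flat_configs_rev[OF flat] pos_edges_subset_edges by blast
    thus "defect \<rho> (\<tau> (rev_edge f)) = defect \<rho> (\<tau> f)"
      by (simp add: defect_def Re_faithful_char_uminus_mod[OF fc])
  qed
  also have "(\<Sum>f\<in>?P. defect \<rho> (\<tau> f)) = (\<Sum>f\<in>support N \<tau>. defect \<rho> (\<tau> f))"
    using defect_0[OF fc] by (intro sum.mono_neutral_right finite_pos_edges) (auto simp: support_def)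
  finally show ?thesis
    unfolding rel_weight_def
    by (simp add: exp_sum[OF finite_support] sum_distrib_left mult.assoc mult.left_commute)
qed

lemma flat_configs_eq_if_eq_on_support:
  assumes flat: "\<tau>1 \<in> flat_configs N n" "\<tau>2 \<in> flat_configs N n"
    and supp: "support N \<tau>1 = K" "support N \<tau>2 = K" and eq: "\<forall>f\<in>K. \<tau>1 f = \<tau>2 f"
  shows "\<tau>1 = \<tau>2"
proof
  fix f
  have pos: "\<tau>1 g = \<tau>2 g" if g: "g \<in> pos_edges N" for g
    using eq supp g by (cases "g \<in> K") (auto simp: support_def)
  show "\<tau>1 f = \<tau>2 f"
  proof (cases "f \<in> edges N")
    case False thus ?thesis using flat_configs_outside flat by metis
  next
    case True
    show ?thesis
    proof (cases "f \<in> pos_edges N")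
      case False
      hence r: "rev_edge f \<in> pos_edges N" using edges_pos_or_rev True by blast
      hence "rev_edge f \<in> edges N" using pos_edges_subset_edges by blast
      thus ?thesis using flat_configs_rev[OF flat(1)] flat_configs_rev[OF flat(2)] pos[OF r] by fastforce
    qed (rule pos)
  qed
qed

lemma sum_rel_weight_support_eq_le:
  assumes fc: "faithful_char n \<rho>" and KP: "K \<subseteq> pos_edges N"
  shows "(\<Sum>\<tau>\<in>{\<tau>\<in>flat_configs N n. support N \<tau> = K}. rel_weight N \<rho> \<kappa> \<tau>) \<le> alpha0 n \<rho> \<kappa> ^ card K"
proof -
  let ?T = "{\<tau>\<in>flat_configs N n. support N \<tau> = K}"
  let ?F = "\<lambda>\<phi>. \<Prod>f\<in>K. exp (2 * \<kappa> * defect \<rho> (\<phi> f))"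
  have fK: "finite K" using KP finite_pos_edges finite_subset by blast
  have inj: "inj_on (\<lambda>\<tau>. restrict \<tau> K) ?T"
    by (rule inj_onI)
      (metis (mono_tags, lifting) flat_configs_eq_if_eq_on_support mem_Collect_eq restrict_apply')
  have "(\<Sum>\<tau>\<in>?T. rel_weight N \<rho> \<kappa> \<tau>) = (\<Sum>\<tau>\<in>?T. ?F (restrict \<tau> K))"
    using rel_weight_eq_prod_support[OF fc] by (intro sum.cong) auto
  also have "\<dots> = (\<Sum>\<phi>\<in>(\<lambda>\<tau>. restrict \<tau> K) ` ?T. ?F \<phi>)"
    by (simp add: sum.reindex[OF inj])
  also have "\<dots> \<le> (\<Sum>\<phi>\<in>PiE K (\<lambda>_. {1..<n}). ?F \<phi>)"
  proof (rule sum_mono2)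
    show "finite (PiE K (\<lambda>_. {1..<n}))" using fK by (simp add: finite_PiE)
    have "\<tau> f \<in> {1..<n}" if "\<tau> \<in> ?T" "f \<in> K" for \<tau> f
    proof -
      have "f \<in> edges N" "\<tau> f \<noteq> 0" using that pos_edges_subset_edges by (auto simp: support_def)
      thus ?thesis using that flat_configs_range[of \<tau> N n f] by auto
    qed
    thus "(\<lambda>\<tau>. restrict \<tau> K) ` ?T \<subseteq> PiE K (\<lambda>_. {1..<n})" by auto
  qed (simp add: prod_nonneg)
  also have "\<dots> = (\<Prod>f\<in>K. \<Sum>v\<in>{1..<n}. exp (2 * \<kappa> * defect \<rho> v))"
    by (rule prod_sum_PiE[symmetric]) (use fK in auto)
  also have "\<dots> = alpha0 n \<rho> \<kappa> ^ card K"
    by (simp add: alpha0_def defect_def)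
  finally show ?thesis .
qed

lemma sum_rel_weight_component_le:
  assumes n2: "n \<ge> 2" and fc: "faithful_char n \<rho>" and KP: "K \<subseteq> pos_edges N"
  shows "(\<Sum>\<sigma>\<in>{\<sigma>\<in>flat_configs N n. component N (support N \<sigma>) e = K}. rel_weight N \<rho> \<kappa> \<sigma>)
    \<le> alpha0 n \<rho> \<kappa> ^ card K * (\<Sum>\<sigma>\<in>flat_configs N n. rel_weight N \<rho> \<kappa> \<sigma>)"
proof -
  let ?C = "{\<sigma>\<in>flat_configs N n. component N (support N \<sigma>) e = K}"
  let ?T = "{\<tau>\<in>flat_configs N n. support N \<tau> = K}"
  let ?split = "\<lambda>\<sigma>. (config_on K \<sigma>, config_off K \<sigma>)"
  let ?w = "rel_weight N \<rho> \<kappa>"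
  have split: "?split \<sigma> \<in> ?T \<times> flat_configs N n" if \<sigma>: "\<sigma> \<in> ?C" for \<sigma>
  proof -
    have "K \<subseteq> support N \<sigma>" using \<sigma> component_subset by blast
    moreover have "plaquette_closed N \<sigma> K" using \<sigma> component_plaquette_closed by blast
    ultimately show ?thesis
      using flat_configs_config_on_off[OF n2 _ KP] support_config_on \<sigma> by auto
  qed
  have inj: "inj_on ?split ?C"
  proof (rule inj_onI)
    fix \<sigma> \<sigma>' assume eq: "?split \<sigma> = ?split \<sigma>'"
    show "\<sigma> = \<sigma>'"
    proof
      fix f
      show "\<sigma> f = \<sigma>' f" using eq config_on_add_config_off[of K _ f] by (metis prod.inject)
    qed
  qed
  have "(\<Sum>\<sigma>\<in>?C. ?w \<sigma>) = (\<Sum>\<sigma>\<in>?C. ?w (config_on K \<sigma>) * ?w (config_off K \<sigma>))"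
    using rel_weight_config_on_off[OF fc] by (intro sum.cong) auto
  also have "\<dots> = (\<Sum>q\<in>?split ` ?C. ?w (fst q) * ?w (snd q))"
    by (simp add: sum.reindex[OF inj])
  also have "\<dots> \<le> (\<Sum>q\<in>?T \<times> flat_configs N n. ?w (fst q) * ?w (snd q))"
    using split finite_flat_configs rel_weight_nonneg by (intro sum_mono2) auto
  also have "\<dots> = (\<Sum>\<tau>\<in>?T. ?w \<tau>) * (\<Sum>\<sigma>\<in>flat_configs N n. ?w \<sigma>)"
    by (simp add: sum_product sum.cartesian_product case_prod_beta)
  also have "\<dots> \<le> alpha0 n \<rho> \<kappa> ^ card K * (\<Sum>\<sigma>\<in>flat_configs N n. ?w \<sigma>)"
    using sum_rel_weight_support_eq_le[OF fc KP] rel_weight_nonneg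
    by (intro mult_right_mono sum_nonneg) auto
  finally show ?thesis .
qed

text \<open>Peierls bound: sort configurations by the component of e in their support.\<close>
lemma mu_nonzero_le_sum_components:
  fixes N :: nat and e :: edge
  assumes n2: "n \<ge> 2" and fc: "faithful_char n \<rho>"
  defines "\<C> \<equiv> (\<lambda>\<sigma>. component N (support N \<sigma>) e) ` {\<sigma>\<in>flat_configs N n. \<sigma> e \<noteq> 0}"
  shows "mu N n \<rho> \<kappa> {\<sigma>. \<sigma> e \<noteq> 0} \<le> (\<Sum>K\<in>\<C>. alpha0 n \<rho> \<kappa> ^ card K)"
proof -
  let ?B = "{\<sigma>\<in>flat_configs N n. \<sigma> e \<noteq> 0}"
  let ?c = "\<lambda>\<sigma>. component N (support N \<sigma>) e"
  let ?w = "rel_weight N \<rho> \<kappa>"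
  let ?Z = "\<Sum>\<sigma>\<in>flat_configs N n. ?w \<sigma>"
  have Z_pos: "0 < ?Z"
    using finite_flat_configs zero_in_flat_configs[OF n2] rel_weight_pos rel_weight_nonneg
    by (intro sum_pos2) auto
  have mu_eq: "mu N n \<rho> \<kappa> {\<sigma>. \<sigma> e \<noteq> 0} = (\<Sum>\<sigma>\<in>?B. ?w \<sigma>) / ?Z"
  proof -
    have "{\<sigma>. \<sigma> e \<noteq> 0} \<inter> flat_configs N n = ?B" by auto
    thus ?thesis by (simp add: mu_def weight_eq_rel_weight sum_distrib_left[symmetric])
  qed
  have "(\<Sum>\<sigma>\<in>?B. ?w \<sigma>) = (\<Sum>K\<in>\<C>. \<Sum>\<sigma>\<in>{\<sigma>\<in>?B. ?c \<sigma> = K}. ?w \<sigma>)"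
    unfolding \<C>_def using finite_flat_configs by (intro sum.image_gen) auto
  also have "\<dots> \<le> (\<Sum>K\<in>\<C>. alpha0 n \<rho> \<kappa> ^ card K * ?Z)"
  proof (rule sum_mono)
    fix K assume "K \<in> \<C>"
    then obtain \<sigma> where "K = ?c \<sigma>" unfolding \<C>_def by blast
    hence KP: "K \<subseteq> pos_edges N"
      using component_subset[of N "support N \<sigma>" e] by (auto simp: support_def)
    have "(\<Sum>\<sigma>\<in>{\<sigma>\<in>?B. ?c \<sigma> = K}. ?w \<sigma>) \<le> (\<Sum>\<sigma>\<in>{\<sigma>\<in>flat_configs N n. ?c \<sigma> = K}. ?w \<sigma>)"
      using finite_flat_configs rel_weight_nonneg by (intro sum_mono2) auto
    also have "\<dots> \<le> alpha0 n \<rho> \<kappa> ^ card K * ?Z"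
      by (rule sum_rel_weight_component_le[OF n2 fc KP])
    finally show "(\<Sum>\<sigma>\<in>{\<sigma>\<in>?B. ?c \<sigma> = K}. ?w \<sigma>) \<le> alpha0 n \<rho> \<kappa> ^ card K * ?Z" .
  qed
  also have "\<dots> = (\<Sum>K\<in>\<C>. alpha0 n \<rho> \<kappa> ^ card K) * ?Z"
    by (simp add: sum_distrib_right)
  finally show ?thesis using mu_eq Z_pos by (simp add: pos_divide_le_eq)
qed

text \<open>The eight edges of card_support_ge_8 have to lie in the component itself, so the
  bound is applied to the flat configuration obtained by restricting to the component.\<close>
lemma component_card_ge_8:
  assumes n2: "n \<ge> 2" and flat: "\<sigma> \<in> flat_configs N n" and e: "e \<in> pos_edges N"
    and H: "bdS (cobdS (bdS (cobd e))) \<subseteq> edges N" and nonzero: "\<sigma> e \<noteq> 0"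
  shows "8 \<le> card (component N (support N \<sigma>) e)"
proof -
  let ?K = "component N (support N \<sigma>) e"
  have K: "?K \<subseteq> support N \<sigma>" "e \<in> ?K"
    using component_subset self_in_component e nonzero by (auto simp: support_def)
  hence KP: "?K \<subseteq> pos_edges N" by (auto simp: support_def)
  have flat_on: "config_on ?K \<sigma> \<in> flat_configs N n"
    by (rule flat_configs_config_on_off(1)[OF n2 flat KP component_plaquette_closed])
  obtain x j where xj: "e = (x, x + unitv j)" using e by (auto simp: pos_edges_def)
  have "config_on ?K \<sigma> e = \<sigma> e" using K by (simp add: config_on_def both_orientations_def)
  hence "8 \<le> card (support N (config_on ?K \<sigma>))"
    using card_support_ge_8[OF flat_on] e H nonzero unfolding xj by simp
  thus ?thesis using support_config_on[OF K(1)] by simp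
qed

lemma component_closed_walk:
  assumes "\<sigma> e \<noteq> 0" "e \<in> pos_edges N"
  shows "\<exists>w. set w \<subseteq> pos_edges N \<and> closed_walk_through N e (component N (support N \<sigma>) e) w"
proof -
  have "e \<in> support N \<sigma>" using assms by (simp add: support_def)
  then obtain w where w: "closed_walk_through N e (component N (support N \<sigma>) e) w"
    using closed_walk_through_component finite_subset[OF component_subset finite_support] by blast
  moreover have "set w \<subseteq> pos_edges N"
    using w component_subset by (fastforce simp: closed_walk_through_def support_def)
  ultimately show ?thesis by blast
qed

lemma sum_power_card_le:
  fixes a :: real
  assumes a0: "0 \<le> a" and fin: "finite \<K>"
    and walk: "\<forall>K\<in>\<K>. \<exists>w. set w \<subseteq> pos_edges N \<and> closed_walk_through N e K w"
    and card: "\<forall>K\<in>\<K>. 8 \<le> card K \<and> card K \<le> M"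
  shows "(\<Sum>K\<in>\<K>. a ^ card K) \<le> (\<Sum>m=8..M. 18 ^ (2 * m - 3) * a ^ m)"
proof -
  have "(\<Sum>K\<in>\<K>. a ^ card K) = (\<Sum>m\<in>card ` \<K>. \<Sum>K\<in>{K\<in>\<K>. card K = m}. a ^ card K)"
    by (rule sum.image_gen[OF fin])
  also have "\<dots> = (\<Sum>m\<in>card ` \<K>. real (card {K\<in>\<K>. card K = m}) * a ^ m)"
    by (rule sum.cong[OF refl]) simp
  also have "\<dots> \<le> (\<Sum>m=8..M. real (card {K\<in>\<K>. card K = m}) * a ^ m)"
    using card a0 by (intro sum_mono2) auto
  also have "\<dots> \<le> (\<Sum>m=8..M. 18 ^ (2 * m - 3) * a ^ m)"
  proof (rule sum_mono)
    fix m :: nat assume "m \<in> {8..M}"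
    hence "card {K\<in>\<K>. card K = m} \<le> 18 ^ (2 * m - 3)"
      using card_closed_walk_sets_le[OF walk] by simp
    hence "real (card {K\<in>\<K>. card K = m}) \<le> real ((18::nat) ^ (2 * m - 3))"
      by (simp only: of_nat_le_iff)
    hence "real (card {K\<in>\<K>. card K = m}) \<le> 18 ^ (2 * m - 3)" by simp
    thus "real (card {K\<in>\<K>. card K = m}) * a ^ m \<le> 18 ^ (2 * m - 3) * a ^ m"
      using a0 by (simp add: mult_right_mono)
  qed
  finally show ?thesis .
qed

lemma sum_geometric_tail_le:
  fixes a :: real
  assumes a0: "0 \<le> a" and q1: "18^2 * a < 1"
  shows "(\<Sum>m=8..M. 18 ^ (2 * m - 3) * a ^ m) \<le> 18^13 * a^8 / (1 - 18^2 * a)"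
proof -
  let ?q = "18^2 * a :: real"
  have "(\<Sum>m=8..M. 18 ^ (2 * m - 3) * a ^ m) \<le> (\<Sum>m\<in>(\<lambda>i. i + 8) ` {..<M}. 18 ^ (2 * m - 3) * a ^ m)"
  proof (rule sum_mono2)
    show "{8..M} \<subseteq> (\<lambda>i. i + 8) ` {..<M}"
    proof
      fix m assume "m \<in> {8..M}"
      hence "m = (m - 8) + 8" "m - 8 < M" by auto
      thus "m \<in> (\<lambda>i. i + 8) ` {..<M}" by blast
    qed
  qed (use a0 in auto)
  also have "\<dots> = (\<Sum>i<M. 18^13 * a^8 * ?q ^ i)"
  proof -
    have "18 ^ (2 * (i + 8) - 3) * a ^ (i + 8) = 18^13 * a^8 * ?q ^ i" for i :: nat
    proof -
      have "2 * (i + 8) - 3 = 13 + 2 * i" by simp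
      thus ?thesis by (simp add: power_add power_mult power_mult_distrib)
    qed
    thus ?thesis by (simp add: sum.reindex)
  qed
  also have "\<dots> = 18^13 * a^8 * (\<Sum>i<M. ?q ^ i)" by (simp add: sum_distrib_left)
  also have "\<dots> = 18^13 * a^8 * ((1 - ?q ^ M) / (1 - ?q))"
  proof -
    have "?q \<noteq> 1" using q1 by simp
    thus ?thesis using sum_gp_strict[of ?q M] by (simp only: if_False)
  qed
  also have "\<dots> \<le> 18^13 * a^8 * (1 / (1 - ?q))"
    using q1 a0 by (intro mult_left_mono divide_right_mono) auto
  finally show ?thesis by simp
qed

lemma alpha0_nonneg: "0 \<le> alpha0 n \<rho> \<kappa>"
  by (simp add: alpha0_def sum_nonneg)

theorem mainTheorem16:
  fixes N :: nat and n :: int and \<rho> :: "int \<Rightarrow> complex" and \<kappa> :: real and e :: edge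
  assumes "n \<ge> 2"
    and "faithful_char n \<rho>"
    and "\<kappa> \<ge> 0"
    and "18^2 * alpha0 n \<rho> \<kappa> * (2 + alpha0 n \<rho> \<kappa>) < 1"
    and "e \<in> pos_edges N"
    and "bdS (cobdS (bdS (cobd e))) \<subseteq> edges N"
  shows "mu N n \<rho> \<kappa> {\<sigma>'. \<sigma>' e \<noteq> 0}
           \<le> (18^13 / (1 - 18^2 * alpha0 n \<rho> \<kappa>)) * alpha0 n \<rho> \<kappa> ^ 8"
proof -
  let ?a = "alpha0 n \<rho> \<kappa>"
  let ?\<C> = "(\<lambda>\<sigma>. component N (support N \<sigma>) e) ` {\<sigma>\<in>flat_configs N n. \<sigma> e \<noteq> 0}"
  have a0: "0 \<le> ?a" by (rule alpha0_nonneg)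
  have "18^2 * ?a * 1 \<le> 18^2 * ?a * (2 + ?a)" using a0 by (intro mult_left_mono) auto
  hence q1: "18^2 * ?a < 1" using assms(4) by simp
  have "mu N n \<rho> \<kappa> {\<sigma>'. \<sigma>' e \<noteq> 0} \<le> (\<Sum>K\<in>?\<C>. ?a ^ card K)"
    by (rule mu_nonzero_le_sum_components[OF assms(1,2)])
  also have "\<dots> \<le> (\<Sum>m=8..card (pos_edges N). 18 ^ (2 * m - 3) * ?a ^ m)"
  proof (rule sum_power_card_le[OF a0])
    show "finite ?\<C>" using finite_flat_configs by simp
    show "\<forall>K\<in>?\<C>. \<exists>w. set w \<subseteq> pos_edges N \<and> closed_walk_through N e K w"
      using component_closed_walk assms(5) by blast
    show "\<forall>K\<in>?\<C>. 8 \<le> card K \<and> card K \<le> card (pos_edges N)"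
      using component_card_ge_8[OF assms(1) _ assms(5,6)] component_subset support_subset_pos_edges
        finite_pos_edges by (blast intro: card_mono order_trans)
  qed
  also have "\<dots> \<le> 18^13 * ?a^8 / (1 - 18^2 * ?a)"
    by (rule sum_geometric_tail_le[OF a0 q1])
  finally show ?thesis by simp
qed

end
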